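(* Let $\mathfrak A\subseteq\mathfrak G_\bullet$ be a log-free subgrid. Then there is a hereditary log-free subgrid $\mathfrak B$ with $\mathfrak B\supseteq\mathfrak A$ such that the height of $\mathfrak B$ equals the height of $\mathfrak A$.
   Context: Log-free transmonomials: $\mathfrak G_0=\{x^b:b\in\mathbb R\}$, and for $N\ge1$, $\mathfrak G_N=\{x^be^L: b\in\mathbb R,\ L \text{ a purely large transseries with } \operatorname{supp}L\subseteq\mathfrak G_{N-1}\}$; $\mathfrak G_\bullet=\bigcup_N\mathfrak G_N$, with the usual ordering of transmonomials. A ratio set is a finite set of monomials $\prec1$; a grid is a set $\mathfrak J^{\boldsymbol\mu,\mathbf m}=\{\boldsymbol\mu^{\mathbf k}:\mathbf k\in\mathbb Z^n,\mathbf k\ge\mathbf m\}$ for a ratio set $\boldsymbol\mu=\{\mu_1,\dots,\mu_n\}$, and a subgrid is a subset of a grid. The height of a log-free subgrid is the least $N$ with $\mathfrak A\subseteq\mathfrak G_N$. A log-free subgrid $\mathfrak B$ is hereditary if for every $x^be^L\in\mathfrak B$ ($b\in\mathbb R$, $L$ purely large log-free) we have $\operatorname{supp}L\subseteq\mathfrak B$. *)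

theory Defs
  imports Complex_Main "HOL-Library.Countable_Set_Type"
begin

text \<open>Log-free transmonomials x^b e^L.  A (grid-based) transseries L is encoded by the
countable set of pairs (monomial, nonzero coefficient) of its support (its graph).
Together with the well-formedness conditions built into the sets G N below, this
representation is canonical: every element of G N is a unique term.\<close>

datatype mono = Mono real "(mono \<times> real) cset"

definition supp :: "(mono \<times> real) cset \<Rightarrow> mono set" where
  "supp L = fst ` rcset L"

definition coeff :: "(mono \<times> real) cset \<Rightarrow> mono \<Rightarrow> real" where
  "coeff L m = (if m \<in> supp L then (SOME c. (m, c) \<in> rcset L) else 0)"

definition wf_ser :: "(mono \<times> real) cset \<Rightarrow> bool" where
  "wf_ser L \<longleftrightarrow> (\<forall>m c c'. (m, c) \<in> rcset L \<and> (m, c') \<in> rcset L \<longrightarrow> c = c')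
                 \<and> (\<forall>m c. (m, c) \<in> rcset L \<longrightarrow> c \<noteq> 0)"

definition ser_add :: "(mono \<times> real) cset \<Rightarrow> (mono \<times> real) cset \<Rightarrow> (mono \<times> real) cset" where
  "ser_add L M = acset {(m, coeff L m + coeff M m) | m. m \<in> supp L \<union> supp M \<and> coeff L m + coeff M m \<noteq> 0}"

definition ser_neg :: "(mono \<times> real) cset \<Rightarrow> (mono \<times> real) cset" where
  "ser_neg L = cimage (\<lambda>(m, c). (m, - c)) L"

definition mone :: mono where "mone = Mono 0 cempty"

fun mmul :: "mono \<Rightarrow> mono \<Rightarrow> mono" where
  "mmul (Mono b L) (Mono c M) = Mono (b + c) (ser_add L M)"

fun minv :: "mono \<Rightarrow> mono" where
  "minv (Mono b L) = Mono (- b) (ser_neg L)"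

definition mpow :: "mono \<Rightarrow> int \<Rightarrow> mono" where
  "mpow u k = (if 0 \<le> k then (mmul u ^^ nat k) mone else (mmul (minv u) ^^ nat (- k)) mone)"

definition mprod :: "mono list \<Rightarrow> int list \<Rightarrow> mono" where
  "mprod \<mu> k = foldr mmul (map2 mpow \<mu> k) mone"

definition grid :: "mono list \<Rightarrow> int list \<Rightarrow> mono set" where
  "grid \<mu> m0 = {mprod \<mu> k | k. length k = length \<mu> \<and> (\<forall>i < length \<mu>. m0 ! i \<le> k ! i)}"

text \<open>Ordering of monomials at level N (strict "\<prec>"), defined by recursion on the level:
  x^b e^L \<prec> x^c e^M iff L < M (leading coefficient of M - L positive), or L = M and b < c.\<close>
primrec lt :: "nat \<Rightarrow> mono \<Rightarrow> mono \<Rightarrow> bool" where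
  "lt 0 u v = (case u of Mono b L \<Rightarrow> case v of Mono c M \<Rightarrow> b < c)"
| "lt (Suc N) u v = (case u of Mono b L \<Rightarrow> case v of Mono c M \<Rightarrow>
      (\<exists>m. coeff L m < coeff M m \<and> (\<forall>n. lt N m n \<longrightarrow> coeff L n = coeff M n))
      \<or> (L = M \<and> b < c))"

text \<open>The sets G N of log-free transmonomials of height at most N.  For N \<ge> 1 the
exponent L must be a purely large grid-based transseries with support in G (N-1),
i.e. its support is a subgrid with ratio set in G (N-1).\<close>
primrec G :: "nat \<Rightarrow> mono set" where
  "G 0 = {Mono b cempty | b. True}"
| "G (Suc N) = {Mono b L | b L. wf_ser L \<and> supp L \<subseteq> G N
      \<and> (\<forall>m \<in> supp L. lt N mone m)
      \<and> (\<exists>\<mu> m0. set \<mu> \<subseteq> G N \<and> (\<forall>u \<in> set \<mu>. lt N u mone) \<and> length m0 = length \<mu>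
               \<and> supp L \<subseteq> grid \<mu> m0)}"

definition Gall :: "mono set" where
  "Gall = (\<Union>N. G N)"

definition mono_lt :: "mono \<Rightarrow> mono \<Rightarrow> bool" where
  "mono_lt u v \<longleftrightarrow> (\<exists>N. u \<in> G N \<and> v \<in> G N \<and> lt N u v)"

definition logfree_subgrid :: "mono set \<Rightarrow> bool" where
  "logfree_subgrid A \<longleftrightarrow> A \<subseteq> Gall \<and>
     (\<exists>\<mu> m0. set \<mu> \<subseteq> Gall \<and> (\<forall>u \<in> set \<mu>. mono_lt u mone) \<and> length m0 = length \<mu>
            \<and> A \<subseteq> grid \<mu> m0)"

definition height :: "mono set \<Rightarrow> nat" where
  "height A = (LEAST N. A \<subseteq> G N)"

definition hereditary :: "mono set \<Rightarrow> bool" where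
  "hereditary B \<longleftrightarrow> (\<forall>b L. Mono b L \<in> B \<longrightarrow> supp L \<subseteq> B)"

end

theory Submission
  imports Defs
begin

text \<open>The hereditary closure of \<open>A\<close> works.  Since the exponent of a monomial of \<open>G (N+1)\<close>
has support in \<open>G N \<subseteq> G (N+1)\<close>, closing under supports never leaves \<open>G N\<close>, so the height is
unchanged.  The closure is still a subgrid: every monomial of the grid generated by \<open>\<mu>\<close> has
its exponent supported in the union of the supports of the exponents of the \<open>\<mu>\<^sub>i\<close>, so the
closure of \<open>A\<close> lies in \<open>A\<close> together with the closures of these finitely many supports; each of
those is a subgrid by induction on the height of \<open>\<mu>\<^sub>i\<close>, and finite unions of subgrids are
subgrids.\<close>

fun mexp :: "mono \<Rightarrow> (mono \<times> real) cset" where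
  "mexp (Mono b L) = L"

lemma rcset_cempty [simp]: "rcset cempty = {}"
  by (simp add: bot_cset.rep_eq)

lemma supp_cempty [simp]: "supp cempty = {}"
  by (simp add: supp_def)

lemma coeff_notin_supp: "m \<notin> supp L \<Longrightarrow> coeff L m = 0"
  by (simp add: coeff_def)

lemma coeff_eqI: "wf_ser L \<Longrightarrow> (m, c) \<in> rcset L \<Longrightarrow> coeff L m = c"
  unfolding coeff_def supp_def wf_ser_def
  by (auto intro!: some_equality) (metis fst_conv image_eqI)

lemma rcset_ser_add:
  "rcset (ser_add L M) =
     {(m, coeff L m + coeff M m) | m. m \<in> supp L \<union> supp M \<and> coeff L m + coeff M m \<noteq> 0}"
proof -
  have "{(m, coeff L m + coeff M m) | m. m \<in> supp L \<union> supp M \<and> coeff L m + coeff M m \<noteq> 0}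
        \<subseteq> (\<lambda>m. (m, coeff L m + coeff M m)) ` (supp L \<union> supp M)"
    by blast
  moreover have "countable ((\<lambda>m. (m, coeff L m + coeff M m)) ` (supp L \<union> supp M))"
    by (simp add: supp_def)
  ultimately show ?thesis
    unfolding ser_add_def by (subst acset_inverse) (auto intro: countable_subset)
qed

lemma supp_ser_add: "supp (ser_add L M) \<subseteq> supp L \<union> supp M"
  unfolding supp_def[of "ser_add L M"] rcset_ser_add by auto

lemma wf_ser_add: "wf_ser (ser_add L M)"
  unfolding wf_ser_def rcset_ser_add by auto

lemma supp_ser_neg: "supp (ser_neg L) = supp L"
  unfolding supp_def ser_neg_def by (force simp: cimage.rep_eq)

lemma ser_add_cempty_left:
  assumes "wf_ser L"
  shows "ser_add cempty L = L"
proof -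
  have "(m, c) \<in> rcset (ser_add cempty L) \<longleftrightarrow> (m, c) \<in> rcset L" for m c
  proof
    assume "(m, c) \<in> rcset (ser_add cempty L)"
    then have "c = coeff L m" "m \<in> supp L"
      by (auto simp: rcset_ser_add coeff_def)
    then show "(m, c) \<in> rcset L"
      using assms coeff_eqI by (force simp: supp_def)
  next
    assume mc: "(m, c) \<in> rcset L"
    then have "coeff L m = c" "c \<noteq> 0"
      using assms coeff_eqI by (auto simp: wf_ser_def)
    moreover have "m \<in> supp L"
      using mc unfolding supp_def by force
    ultimately show "(m, c) \<in> rcset (ser_add cempty L)"
      by (auto simp: rcset_ser_add coeff_def)
  qed
  then show ?thesis
    by (metis rcset_inverse subrelI subset_antisym)
qed

lemma wf_ser_mexp_mone: "wf_ser (mexp mone)"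
  by (simp add: mone_def wf_ser_def)

lemma mmul_mone_left: "wf_ser (mexp u) \<Longrightarrow> mmul mone u = u"
  by (cases u) (simp add: mone_def ser_add_cempty_left)

lemma supp_mexp_mmul: "supp (mexp (mmul u v)) \<subseteq> supp (mexp u) \<union> supp (mexp v)"
  by (cases u; cases v) (simp add: supp_ser_add)

lemma wf_ser_mexp_foldr_mmul: "wf_ser (mexp (foldr mmul xs mone))"
proof (cases xs)
  case Nil
  then show ?thesis by (simp add: wf_ser_mexp_mone)
next
  case (Cons a ys)
  then show ?thesis
    by (cases a; cases "foldr mmul ys mone") (simp add: wf_ser_add)
qed

lemma wf_ser_mexp_mprod: "wf_ser (mexp (mprod \<mu> k))"
  unfolding mprod_def by (rule wf_ser_mexp_foldr_mmul)

lemma supp_mexp_foldr_mmul: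
  "supp (mexp (foldr mmul xs mone)) \<subseteq> (\<Union>x\<in>set xs. supp (mexp x))"
  by (induction xs) (use supp_mexp_mmul in \<open>auto simp: mone_def\<close>)

lemma supp_mexp_funpow_mmul: "supp (mexp ((mmul u ^^ n) mone)) \<subseteq> supp (mexp u)"
  by (induction n) (use supp_mexp_mmul in \<open>auto simp: mone_def\<close>)

lemma supp_mexp_mpow: "supp (mexp (mpow u k)) \<subseteq> supp (mexp u)"
proof -
  have "supp (mexp (minv u)) = supp (mexp u)"
    by (cases u) (simp add: supp_ser_neg)
  then show ?thesis
    unfolding mpow_def using supp_mexp_funpow_mmul[where u=u] supp_mexp_funpow_mmul[where u="minv u"]
    by auto
qed

lemma supp_mexp_mprod: "supp (mexp (mprod \<mu> k)) \<subseteq> (\<Union>v\<in>set \<mu>. supp (mexp v))"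
proof -
  have "supp (mexp (mprod \<mu> k)) \<subseteq> (\<Union>x\<in>set (map2 mpow \<mu> k). supp (mexp x))"
    unfolding mprod_def by (rule supp_mexp_foldr_mmul)
  also have "\<dots> \<subseteq> (\<Union>v\<in>set \<mu>. supp (mexp v))"
    using supp_mexp_mpow by (fastforce dest: set_zip_leftD)
  finally show ?thesis .
qed

lemma supp_mexp_grid: "u \<in> grid \<mu> m0 \<Longrightarrow> supp (mexp u) \<subseteq> (\<Union>v\<in>set \<mu>. supp (mexp v))"
  using supp_mexp_mprod by (auto simp: grid_def)

lemma mprod_append_zeros:
  assumes "length k = length \<mu>"
  shows "mprod (\<mu> @ \<nu>) (k @ replicate (length \<nu>) 0) = mprod \<mu> k"
    and "mprod (\<nu> @ \<mu>) (replicate (length \<nu>) 0 @ k) = mprod \<mu> k"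
proof -
  have zeros: "map2 mpow \<nu> (replicate (length \<nu>) 0) = replicate (length \<nu>) mone"
    by (induction \<nu>) (auto simp: mpow_def)
  have mones: "(mmul mone ^^ n) x = x" if "wf_ser (mexp x)" for n x
    using that by (induction n) (auto simp: mmul_mone_left)
  show "mprod (\<mu> @ \<nu>) (k @ replicate (length \<nu>) 0) = mprod \<mu> k"
    using assms by (simp add: mprod_def zip_append zeros mones wf_ser_mexp_mone)
  show "mprod (\<nu> @ \<mu>) (replicate (length \<nu>) 0 @ k) = mprod \<mu> k"
    using assms wf_ser_mexp_mprod[of \<mu> k] by (simp add: mprod_def zip_append zeros mones)
qed

definition subgrid :: "mono set \<Rightarrow> bool" where
  "subgrid A \<longleftrightarrow> (\<exists>\<mu> m0. set \<mu> \<subseteq> Gall \<and> (\<forall>u \<in> set \<mu>. mono_lt u mone)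
                      \<and> length m0 = length \<mu> \<and> A \<subseteq> grid \<mu> m0)"

lemma logfree_subgrid_iff: "logfree_subgrid A \<longleftrightarrow> A \<subseteq> Gall \<and> subgrid A"
  unfolding logfree_subgrid_def subgrid_def ..

lemma grid_subset_grid_append:
  assumes "length m = length \<mu>" "length n = length \<nu>"
  shows "grid \<mu> m \<subseteq> grid (\<mu> @ \<nu>) (map (min 0) m @ map (min 0) n)"
    and "grid \<nu> n \<subseteq> grid (\<mu> @ \<nu>) (map (min 0) m @ map (min 0) n)"
proof -
  let ?m = "map (min 0) m @ map (min 0) n"
  show "grid \<mu> m \<subseteq> grid (\<mu> @ \<nu>) ?m"
  proof
    fix x assume "x \<in> grid \<mu> m"
    then obtain k where k: "x = mprod \<mu> k" "length k = length \<mu>" "\<forall>i < length \<mu>. m ! i \<le> k ! i"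
      by (auto simp: grid_def)
    then have "\<forall>i < length (\<mu> @ \<nu>). ?m ! i \<le> (k @ replicate (length \<nu>) 0) ! i"
      using assms by (auto simp: nth_append)
    with k assms show "x \<in> grid (\<mu> @ \<nu>) ?m"
      unfolding grid_def by (intro CollectI exI[of _ "k @ replicate (length \<nu>) 0"])
        (auto simp: mprod_append_zeros)
  qed
  show "grid \<nu> n \<subseteq> grid (\<mu> @ \<nu>) ?m"
  proof
    fix x assume "x \<in> grid \<nu> n"
    then obtain k where k: "x = mprod \<nu> k" "length k = length \<nu>" "\<forall>i < length \<nu>. n ! i \<le> k ! i"
      by (auto simp: grid_def)
    then have "\<forall>i < length (\<mu> @ \<nu>). ?m ! i \<le> (replicate (length \<mu>) 0 @ k) ! i"
      using assms by (auto simp: nth_append min.coboundedI2)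
    with k assms show "x \<in> grid (\<mu> @ \<nu>) ?m"
      unfolding grid_def by (intro CollectI exI[of _ "replicate (length \<mu>) 0 @ k"])
        (auto simp: mprod_append_zeros)
  qed
qed

lemma subgrid_empty: "subgrid {}"
  unfolding subgrid_def by (intro exI[of _ "[]"]) simp

lemma subgrid_subset: "subgrid B \<Longrightarrow> A \<subseteq> B \<Longrightarrow> subgrid A"
  unfolding subgrid_def by blast

lemma subgrid_Un:
  assumes "subgrid A" "subgrid B"
  shows "subgrid (A \<union> B)"
proof -
  obtain \<mu> m \<nu> n
    where \<mu>: "set \<mu> \<subseteq> Gall" "\<forall>u \<in> set \<mu>. mono_lt u mone" "length m = length \<mu>" "A \<subseteq> grid \<mu> m"
      and \<nu>: "set \<nu> \<subseteq> Gall" "\<forall>u \<in> set \<nu>. mono_lt u mone" "length n = length \<nu>" "B \<subseteq> grid \<nu> n"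
    using assms unfolding subgrid_def by blast
  have "A \<union> B \<subseteq> grid (\<mu> @ \<nu>) (map (min 0) m @ map (min 0) n)"
    using grid_subset_grid_append[OF \<mu>(3) \<nu>(3)] \<mu>(4) \<nu>(4) by blast
  with \<mu> \<nu> show ?thesis
    unfolding subgrid_def by (intro exI[of _ "\<mu> @ \<nu>"] exI[of _ "map (min 0) m @ map (min 0) n"]) auto
qed

lemma subgrid_UN: "finite I \<Longrightarrow> (\<And>i. i \<in> I \<Longrightarrow> subgrid (F i)) \<Longrightarrow> subgrid (\<Union>i\<in>I. F i)"
  by (induction I rule: finite_induct) (auto simp: subgrid_empty subgrid_Un)

lemma mexp_G_0: "u \<in> G 0 \<Longrightarrow> mexp u = cempty"
  by auto

lemma supp_mexp_G_Suc: "u \<in> G (Suc N) \<Longrightarrow> supp (mexp u) \<subseteq> G N"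
  by auto

lemma mone_in_G: "mone \<in> G N"
  by (cases N) (auto simp: mone_def wf_ser_def intro!: exI[of _ "[]"])

lemma lt_Suc_eq_lt: "u \<in> G N \<Longrightarrow> v \<in> G N \<Longrightarrow> lt (Suc N) u v = lt N u v"
proof (induction N arbitrary: u v)
  case 0
  then show ?case by auto
next
  case (Suc N)
  from Suc.prems obtain b L c M where u: "u = Mono b L" and v: "v = Mono c M"
    and L: "supp L \<subseteq> G N" and M: "supp M \<subseteq> G N"
    by auto
  have "(\<forall>n. lt (Suc N) m n \<longrightarrow> coeff L n = coeff M n) \<longleftrightarrow> (\<forall>n. lt N m n \<longrightarrow> coeff L n = coeff M n)"
    if "coeff L m < coeff M m" for m
  proof -
    \<comment> \<open>only monomials in the supports matter, and these lie in \<open>G N\<close>\<close>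
    have "m \<in> G N"
      using that L M coeff_notin_supp by (metis less_irrefl subsetD)
    then show ?thesis
      using Suc.IH L M coeff_notin_supp by (metis Un_iff subsetD)
  qed
  then have "(\<exists>m. coeff L m < coeff M m \<and> (\<forall>n. lt (Suc N) m n \<longrightarrow> coeff L n = coeff M n))
      \<longleftrightarrow> (\<exists>m. coeff L m < coeff M m \<and> (\<forall>n. lt N m n \<longrightarrow> coeff L n = coeff M n))"
    by blast
  then show ?case
    unfolding u v by simp
qed

lemma G_subset_G_Suc: "G N \<subseteq> G (Suc N)"
proof (induction N)
  case 0
  show ?case by (auto simp: wf_ser_def intro!: exI[of _ "[]"])
next
  case (Suc N)
  show ?case
  proof
    fix u assume "u \<in> G (Suc N)"
    then obtain b L \<mu> m0 where u: "u = Mono b L" "wf_ser L" "supp L \<subseteq> G N"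
      "\<forall>m \<in> supp L. lt N mone m" "set \<mu> \<subseteq> G N" "\<forall>v \<in> set \<mu>. lt N v mone"
      "length m0 = length \<mu>" "supp L \<subseteq> grid \<mu> m0"
      by auto
    have "\<forall>m \<in> supp L. lt (Suc N) mone m" "\<forall>v \<in> set \<mu>. lt (Suc N) v mone"
      using u(3-6) lt_Suc_eq_lt mone_in_G by blast+
    with u Suc.IH show "u \<in> G (Suc (Suc N))"
      by simp (intro exI conjI; (blast | assumption)?)
  qed
qed

inductive_set hered_closure :: "mono set \<Rightarrow> mono set" for S where
  base: "v \<in> S \<Longrightarrow> v \<in> hered_closure S"
| supp_closed: "u \<in> hered_closure S \<Longrightarrow> m \<in> supp (mexp u) \<Longrightarrow> m \<in> hered_closure S"

lemma subset_hered_closure: "S \<subseteq> hered_closure S"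
  by (auto intro: hered_closure.base)

lemma hereditary_hered_closure: "hereditary (hered_closure S)"
  unfolding hereditary_def by (metis hered_closure.supp_closed mexp.simps subsetI)

lemma hered_closure_empty: "hered_closure {} = {}"
proof -
  have "x \<notin> hered_closure {}" for x
  proof
    assume "x \<in> hered_closure {}"
    then show False by induction auto
  qed
  then show ?thesis by blast
qed

lemma hered_closure_mono: "S \<subseteq> T \<Longrightarrow> hered_closure S \<subseteq> hered_closure T"
proof
  fix x assume "S \<subseteq> T" "x \<in> hered_closure S"
  from this(2) show "x \<in> hered_closure T"
    by induction (use \<open>S \<subseteq> T\<close> in \<open>auto intro: hered_closure.intros\<close>)
qed

lemma hered_closure_UN: "hered_closure (\<Union>i\<in>I. F i) \<subseteq> (\<Union>i\<in>I. hered_closure (F i))"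
proof
  fix x assume "x \<in> hered_closure (\<Union>i\<in>I. F i)"
  then show "x \<in> (\<Union>i\<in>I. hered_closure (F i))"
    by induction (auto intro: hered_closure.intros)
qed

lemma hered_closure_subset_Un_supp:
  "hered_closure S \<subseteq> S \<union> hered_closure (\<Union>u\<in>S. supp (mexp u))"
proof
  fix x assume "x \<in> hered_closure S"
  then show "x \<in> S \<union> hered_closure (\<Union>u\<in>S. supp (mexp u))"
    by induction (auto intro: hered_closure.intros)
qed

lemma hered_closure_subset_G: "S \<subseteq> G N \<Longrightarrow> hered_closure S \<subseteq> G N"
proof
  fix x assume S: "S \<subseteq> G N" and "x \<in> hered_closure S"
  from this(2) show "x \<in> G N"
  proof induction
    case (supp_closed u m)
    show ?case
    proof (cases N)
      case 0
      with supp_closed show ?thesis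
        using mexp_G_0 by fastforce
    next
      case (Suc N')
      with supp_closed show ?thesis
        using supp_mexp_G_Suc G_subset_G_Suc by blast
    qed
  qed (use S in blast)
qed

lemma hered_closure_subset_Gall:
  assumes "S \<subseteq> Gall"
  shows "hered_closure S \<subseteq> Gall"
proof -
  have "hered_closure S \<subseteq> (\<Union>v\<in>S. hered_closure {v})"
    using hered_closure_UN[of "\<lambda>v. {v}" S] by simp
  also have "\<dots> \<subseteq> Gall"
  proof (intro UN_least)
    fix v assume "v \<in> S"
    then obtain N where "{v} \<subseteq> G N"
      using assms unfolding Gall_def by blast
    then show "hered_closure {v} \<subseteq> Gall"
      using hered_closure_subset_G unfolding Gall_def by blast
  qed
  finally show ?thesis .
qed

lemma height_hered_closure: "height (hered_closure S) = height S"
proof -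
  have "hered_closure S \<subseteq> G N \<longleftrightarrow> S \<subseteq> G N" for N
    using hered_closure_subset_G subset_hered_closure by blast
  then show ?thesis
    unfolding height_def by simp
qed

lemma subgrid_hered_closure_of_grid:
  assumes "subgrid S" "S \<subseteq> grid \<mu> m0"
    and "\<And>v. v \<in> set \<mu> \<Longrightarrow> subgrid (hered_closure (supp (mexp v)))"
  shows "subgrid (hered_closure S)"
proof -
  have "hered_closure (\<Union>u\<in>S. supp (mexp u)) \<subseteq> hered_closure (\<Union>v\<in>set \<mu>. supp (mexp v))"
    using assms(2) supp_mexp_grid by (intro hered_closure_mono) blast
  also have "\<dots> \<subseteq> (\<Union>v\<in>set \<mu>. hered_closure (supp (mexp v)))"
    by (rule hered_closure_UN)
  finally have "subgrid (hered_closure (\<Union>u\<in>S. supp (mexp u)))"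
    using subgrid_UN[OF finite_set assms(3)] by (rule subgrid_subset[rotated])
  with assms(1) have "subgrid (S \<union> hered_closure (\<Union>u\<in>S. supp (mexp u)))"
    by (rule subgrid_Un)
  then show ?thesis
    using hered_closure_subset_Un_supp by (rule subgrid_subset)
qed

lemma subgrid_hered_closure_supp_G: "u \<in> G N \<Longrightarrow> subgrid (hered_closure (supp (mexp u)))"
proof (induction N arbitrary: u)
  case 0
  then show ?case by (simp add: mexp_G_0 hered_closure_empty subgrid_empty)
next
  case (Suc N)
  then obtain \<nu> n where \<nu>: "set \<nu> \<subseteq> G N" "\<forall>v \<in> set \<nu>. lt N v mone" "length n = length \<nu>"
      "supp (mexp u) \<subseteq> grid \<nu> n"
    by auto
  have "subgrid (supp (mexp u))"
    unfolding subgrid_def mono_lt_def Gall_def using \<nu> mone_in_G by blast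
  then show ?case
    using \<nu>(4) by (rule subgrid_hered_closure_of_grid) (use \<nu>(1) Suc.IH in blast)
qed

theorem proposition2p21:
  assumes "logfree_subgrid A"
  shows "\<exists>B. logfree_subgrid B \<and> hereditary B \<and> A \<subseteq> B \<and> height B = height A"
proof (intro exI conjI)
  obtain \<mu> m0 where A: "A \<subseteq> Gall" "subgrid A" "set \<mu> \<subseteq> Gall" "A \<subseteq> grid \<mu> m0"
    using assms unfolding logfree_subgrid_def subgrid_def by blast
  have "subgrid (hered_closure (supp (mexp v)))" if "v \<in> set \<mu>" for v
    using that A(3) subgrid_hered_closure_supp_G unfolding Gall_def by blast
  with A(2,4) have "subgrid (hered_closure A)"
    by (rule subgrid_hered_closure_of_grid)
  with A(1) show "logfree_subgrid (hered_closure A)"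
    by (simp add: logfree_subgrid_iff hered_closure_subset_Gall)
qed (simp_all add: hereditary_hered_closure subset_hered_closure height_hered_closure)

end
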